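(* Let $a,b>0$ with $a\ne b$, and $\nu\in(0,1)$ with $\nu\ne\frac12$. Let $r=\min\{\nu,1-\nu\}$, $R=\max\{\nu,1-\nu\}$ and $$E_\nu(a,b):=\frac{1}{\log b-\log a}\left(\frac{a^{1-\nu}b^\nu-a}{\nu}+\frac{b-a^{1-\nu}b^\nu}{1-\nu}-\frac{4\big(\sqrt{ab}-a^{1-\nu}b^\nu\big)}{1-2\nu}\right).$$ Then $$r\,E_\nu(a,b)\le L_\nu(a,b)-a^{1-\nu}b^\nu\le R\,E_\nu(a,b).$$
   Context: For $a,b>0$, $a\neq b$ and $\nu\in(0,1)$, the weighted logarithmic mean is $$L_\nu(a,b):=\frac{1}{\log a-\log b}\left\{\frac{1-\nu}{\nu}\big(a-a^{1-\nu}b^\nu\big)+\frac{\nu}{1-\nu}\big(a^{1-\nu}b^\nu-b\big)\right\}.$$ *)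

theory Defs
  imports Complex_Main
begin

definition weighted_log_mean :: "real \<Rightarrow> real \<Rightarrow> real \<Rightarrow> real" where
  "weighted_log_mean \<nu> a b =
     (1 / (ln a - ln b)) *
     ((1 - \<nu>) / \<nu> * (a - a powr (1 - \<nu>) * b powr \<nu>)
      + \<nu> / (1 - \<nu>) * (a powr (1 - \<nu>) * b powr \<nu> - b))"

definition E_nu :: "real \<Rightarrow> real \<Rightarrow> real \<Rightarrow> real" where
  "E_nu \<nu> a b =
     (1 / (ln b - ln a)) *
     ((a powr (1 - \<nu>) * b powr \<nu> - a) / \<nu>
      + (b - a powr (1 - \<nu>) * b powr \<nu>) / (1 - \<nu>)
      - 4 * (sqrt (a * b) - a powr (1 - \<nu>) * b powr \<nu>) / (1 - 2 * \<nu>))"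

end

theory Submission
  imports Defs
begin

text \<open>With \<open>x = ln b - ln a\<close> and \<open>G = a^(1-\<nu>) b^\<nu>\<close>, the numbers \<open>a\<close>, \<open>b\<close> and \<open>sqrt (ab)\<close>
  are \<open>G exp (x t)\<close> for \<open>t = -\<nu>, 1 - \<nu>, 1/2 - \<nu>\<close>. Both gaps \<open>(1 - \<nu>) E - (L - G)\<close> and
  \<open>(L - G) - \<nu> E\<close> then equal \<open>G (1 - 2\<nu>)\<close> times a positive weight times a difference
  \<open>\<phi>(t) - \<phi>(s)\<close>, \<open>s < t\<close>, of \<open>\<phi>(t) = (exp (x t) - 1 - x t) / (x t^2) = x q(x t)\<close>, where
  \<open>q(z) = (exp z - 1 - z) / z^2\<close> is increasing. Hence both gaps have the sign of \<open>1 - 2\<nu>\<close>,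
  which places \<open>L - G\<close> between \<open>\<nu> E\<close> and \<open>(1 - \<nu>) E\<close>.\<close>

definition exp_rem_quot :: "real \<Rightarrow> real" where
  "exp_rem_quot z = (exp z - 1 - z) / z\<^sup>2"

lemma exp_sub_quadratic_mono:
  fixes u v :: real
  assumes "u \<le> v"
  shows "exp u - u - u\<^sup>2 / 2 \<le> exp v - v - v\<^sup>2 / 2"
proof (rule DERIV_nonneg_imp_nondecreasing[OF assms])
  fix z :: real
  have "((\<lambda>z. exp z - z - z\<^sup>2 / 2) has_real_derivative exp z - 1 - z) (at z)"
    by (auto intro!: derivative_eq_intros)
  moreover have "0 \<le> exp z - 1 - z"
    using exp_ge_add_one_self[of z] by linarith
  ultimately show "\<exists>y. ((\<lambda>z. exp z - z - z\<^sup>2 / 2) has_real_derivative y) (at z) \<and> 0 \<le> y"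
    by blast
qed

lemma exp_rem_quot_ge_half:
  assumes "0 < z"
  shows "1 / 2 \<le> exp_rem_quot z"
  using exp_sub_quadratic_mono[of 0 z] assms by (simp add: exp_rem_quot_def field_simps)

lemma exp_rem_quot_le_half:
  assumes "z < 0"
  shows "exp_rem_quot z \<le> 1 / 2"
  using exp_sub_quadratic_mono[of z 0] assms by (simp add: exp_rem_quot_def field_simps)

lemma exp_rem_quot_numerator_mono:
  fixes u v :: real
  assumes "u \<le> v"
  shows "exp u * (u - 2) + u + 2 \<le> exp v * (v - 2) + v + 2"
proof (rule DERIV_nonneg_imp_nondecreasing[OF assms])
  fix z :: real
  have "((\<lambda>z. exp z * (z - 2) + z + 2) has_real_derivative exp z * (z - 1) + 1) (at z)"
    by (auto intro!: derivative_eq_intros simp: algebra_simps)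
  moreover have "exp z * (1 - z) \<le> exp z * exp (- z)"
    using exp_ge_add_one_self[of "- z"] by (intro mult_left_mono) auto
  then have "0 \<le> exp z * (z - 1) + 1"
    by (simp add: exp_minus field_simps)
  ultimately show "\<exists>y. ((\<lambda>z. exp z * (z - 2) + z + 2) has_real_derivative y) (at z) \<and> 0 \<le> y"
    by blast
qed

lemma exp_rem_quot_has_derivative:
  assumes "z \<noteq> 0"
  shows "(exp_rem_quot has_real_derivative (exp z * (z - 2) + z + 2) / z ^ 3) (at z)"
proof -
  have "(exp_rem_quot has_real_derivative
          ((exp z - 1) * z\<^sup>2 - (exp z - 1 - z) * (2 * z)) / (z\<^sup>2)\<^sup>2) (at z)"
    unfolding exp_rem_quot_def [abs_def] using assms
    by (auto intro!: derivative_eq_intros simp: power2_eq_square)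
  moreover have "((exp z - 1) * z\<^sup>2 - (exp z - 1 - z) * (2 * z)) / (z\<^sup>2)\<^sup>2
      = (exp z * (z - 2) + z + 2) / z ^ 3"
    using assms by (simp add: field_simps power2_eq_square power3_eq_cube)
  ultimately show ?thesis
    by simp
qed

lemma exp_rem_quot_mono_same_sign:
  assumes "u \<le> v" and "0 < u * v"
  shows "exp_rem_quot u \<le> exp_rem_quot v"
proof (rule DERIV_nonneg_imp_nondecreasing[OF assms(1)])
  fix z assume "u \<le> z" "z \<le> v"
  with assms have "z \<noteq> 0"
    by (auto simp: zero_less_mult_iff)
  have "0 \<le> (exp z * (z - 2) + z + 2) / z ^ 3"
  proof (cases "0 < z")
    case True
    then show ?thesis
      using exp_rem_quot_numerator_mono[of 0 z] by simp
  next
    case False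
    with \<open>z \<noteq> 0\<close> have "z ^ 3 < 0"
      by simp
    then show ?thesis
      using exp_rem_quot_numerator_mono[of z 0] False by (simp add: divide_nonpos_neg)
  qed
  with exp_rem_quot_has_derivative[OF \<open>z \<noteq> 0\<close>]
  show "\<exists>y. (exp_rem_quot has_real_derivative y) (at z) \<and> 0 \<le> y"
    by auto
qed

lemma exp_rem_quot_mono:
  assumes "u \<noteq> 0" and "v \<noteq> 0" and "u \<le> v"
  shows "exp_rem_quot u \<le> exp_rem_quot v"
proof (cases "0 < u * v")
  case True
  then show ?thesis
    using exp_rem_quot_mono_same_sign assms by blast
next
  case False
  with assms have "u < 0" "0 < v"
    by (auto simp: zero_less_mult_iff)
  then show ?thesis
    using exp_rem_quot_le_half exp_rem_quot_ge_half by fastforce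
qed

lemma scaled_exp_rem_quot_mono:
  assumes "x \<noteq> 0" and "u \<noteq> 0" and "v \<noteq> 0" and "u \<le> v"
  shows "x * exp_rem_quot (x * u) \<le> x * exp_rem_quot (x * v)"
proof (cases "0 < x")
  case True
  then show ?thesis
    using assms by (intro mult_left_mono exp_rem_quot_mono) auto
next
  case False
  with assms(1) have "x < 0" by simp
  then show ?thesis
    using assms by (intro mult_left_mono_neg exp_rem_quot_mono) auto
qed

lemma scaled_exp_rem_quot_eq:
  assumes "x \<noteq> 0" and "t \<noteq> 0"
  shows "x * exp_rem_quot (x * t) = (exp (x * t) - 1 - x * t) / (x * t\<^sup>2)"
  using assms by (simp add: exp_rem_quot_def power2_eq_square)

lemma exp_parametrization:
  fixes a b \<nu> :: real
  assumes "0 < a" and "0 < b"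
  defines "x \<equiv> ln b - ln a" and "G \<equiv> a powr (1 - \<nu>) * b powr \<nu>"
  shows "G * exp (x * - \<nu>) = a" and "G * exp (x * (1 - \<nu>)) = b"
    and "G * exp (x * (1 / 2 - \<nu>)) = sqrt (a * b)"
proof -
  have G: "G = exp (ln a + x * \<nu>)"
    using assms by (simp add: G_def x_def powr_def exp_add [symmetric] algebra_simps)
  show "G * exp (x * - \<nu>) = a" "G * exp (x * (1 - \<nu>)) = b"
    unfolding G exp_add [symmetric] using assms(1,2) by (simp_all add: x_def algebra_simps)
  have "sqrt (a * b) = exp ((ln a + ln b) / 2)"
    using assms(1,2) by (simp add: powr_half_sqrt [symmetric] powr_def ln_mult)
  then show "G * exp (x * (1 / 2 - \<nu>)) = sqrt (a * b)"
    unfolding G exp_add [symmetric] by (simp add: x_def field_simps)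
qed

lemma gap_identity_upper:
  fixes G P Q S x \<nu> :: real
  assumes "x \<noteq> 0" and "\<nu> \<noteq> 0" and "\<nu> \<noteq> 1" and "\<nu> \<noteq> 1 / 2"
  shows "(1 - \<nu>) * ((1 / x) * ((G - G * P) / \<nu> + (G * Q - G) / (1 - \<nu>) - 4 * (G * S - G) / (1 - 2 * \<nu>)))
      - ((1 / (- x)) * ((1 - \<nu>) / \<nu> * (G * P - G) + \<nu> / (1 - \<nu>) * (G - G * Q)) - G)
    = G * (1 - \<nu>) * (1 - 2 * \<nu>) * ((Q - 1 - x * (1 - \<nu>)) / (x * (1 - \<nu>)\<^sup>2)
                                     - (S - 1 - x * (1 / 2 - \<nu>)) / (x * (1 / 2 - \<nu>)\<^sup>2))"
proof -
  \<comment> \<open>Naming the denominators \<open>1 - \<nu>\<close>, \<open>1 - 2\<nu>\<close>, \<open>1/2 - \<nu>\<close> lets \<open>field_simps\<close> clear them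
    as atoms; the resulting polynomial identity holds only after substituting them back.\<close>
  have "d * ((1 / x) * ((G - G * P) / \<nu> + (G * Q - G) / d - 4 * (G * S - G) / e))
      - ((1 / (- x)) * (d / \<nu> * (G * P - G) + \<nu> / d * (G - G * Q)) - G)
    = G * d * e * ((Q - 1 - x * d) / (x * d\<^sup>2) - (S - 1 - x * c) / (x * c\<^sup>2))"
    if "d = 1 - \<nu>" "e = 1 - 2 * \<nu>" "c = 1 / 2 - \<nu>" "d \<noteq> 0" "e \<noteq> 0" "c \<noteq> 0" for d e c
    using that(4-6) assms(1,2) by (simp add: field_simps power2_eq_square) (simp only: that(1-3), algebra)
  from this [of "1 - \<nu>" "1 - 2 * \<nu>" "1 / 2 - \<nu>"] show ?thesis
    using assms by simp
qed

lemma gap_identity_lower: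
  fixes G P Q S x \<nu> :: real
  assumes "x \<noteq> 0" and "\<nu> \<noteq> 0" and "\<nu> \<noteq> 1" and "\<nu> \<noteq> 1 / 2"
  shows "((1 / (- x)) * ((1 - \<nu>) / \<nu> * (G * P - G) + \<nu> / (1 - \<nu>) * (G - G * Q)) - G)
      - \<nu> * ((1 / x) * ((G - G * P) / \<nu> + (G * Q - G) / (1 - \<nu>) - 4 * (G * S - G) / (1 - 2 * \<nu>)))
    = G * \<nu> * (1 - 2 * \<nu>) * ((S - 1 - x * (1 / 2 - \<nu>)) / (x * (1 / 2 - \<nu>)\<^sup>2)
                                 - (P - 1 - x * - \<nu>) / (x * (- \<nu>)\<^sup>2))"
proof -
  have "((1 / (- x)) * (d / \<nu> * (G * P - G) + \<nu> / d * (G - G * Q)) - G)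
      - \<nu> * ((1 / x) * ((G - G * P) / \<nu> + (G * Q - G) / d - 4 * (G * S - G) / e))
    = G * \<nu> * e * ((S - 1 - x * c) / (x * c\<^sup>2) - (P - 1 - x * - \<nu>) / (x * (- \<nu>)\<^sup>2))"
    if "d = 1 - \<nu>" "e = 1 - 2 * \<nu>" "c = 1 / 2 - \<nu>" "d \<noteq> 0" "e \<noteq> 0" "c \<noteq> 0" for d e c
    using that(4-6) assms(1,2) by (simp add: field_simps power2_eq_square) (simp only: that(1-3), algebra)
  from this [of "1 - \<nu>" "1 - 2 * \<nu>" "1 / 2 - \<nu>"] show ?thesis
    using assms by simp
qed

lemma E_nu_weighted_log_mean_gaps:
  fixes a b \<nu> :: real
  assumes "0 < a" and "0 < b" and "a \<noteq> b"
    and "\<nu> \<noteq> 0" and "\<nu> \<noteq> 1" and "\<nu> \<noteq> 1 / 2"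
  defines "x \<equiv> ln b - ln a" and "G \<equiv> a powr (1 - \<nu>) * b powr \<nu>"
  shows "(1 - \<nu>) * E_nu \<nu> a b - (weighted_log_mean \<nu> a b - G)
           = G * (1 - \<nu>) * (1 - 2 * \<nu>)
             * (x * exp_rem_quot (x * (1 - \<nu>)) - x * exp_rem_quot (x * (1 / 2 - \<nu>)))"
    and "(weighted_log_mean \<nu> a b - G) - \<nu> * E_nu \<nu> a b
           = G * \<nu> * (1 - 2 * \<nu>)
             * (x * exp_rem_quot (x * (1 / 2 - \<nu>)) - x * exp_rem_quot (x * - \<nu>))"
proof -
  have "x \<noteq> 0"
    using assms(1-3) by (simp add: x_def)
  note param = exp_parametrization [OF assms(1,2), of \<nu>, folded x_def G_def]
  have L: "weighted_log_mean \<nu> a b = (1 / (- x)) * ((1 - \<nu>) / \<nu> * (G * exp (x * - \<nu>) - G)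
             + \<nu> / (1 - \<nu>) * (G - G * exp (x * (1 - \<nu>))))"
    unfolding weighted_log_mean_def param by (simp add: x_def G_def)
  have E: "E_nu \<nu> a b = (1 / x) * ((G - G * exp (x * - \<nu>)) / \<nu> + (G * exp (x * (1 - \<nu>)) - G) / (1 - \<nu>)
             - 4 * (G * exp (x * (1 / 2 - \<nu>)) - G) / (1 - 2 * \<nu>))"
    unfolding E_nu_def param by (simp add: x_def G_def)
  have "1 - \<nu> \<noteq> 0" "1 / 2 - \<nu> \<noteq> 0" "- \<nu> \<noteq> 0"
    using assms(4-6) by auto
  note \<phi> = scaled_exp_rem_quot_eq [OF \<open>x \<noteq> 0\<close> this(1)] scaled_exp_rem_quot_eq [OF \<open>x \<noteq> 0\<close> this(2)]
    scaled_exp_rem_quot_eq [OF \<open>x \<noteq> 0\<close> this(3)]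
  show "(1 - \<nu>) * E_nu \<nu> a b - (weighted_log_mean \<nu> a b - G)
           = G * (1 - \<nu>) * (1 - 2 * \<nu>)
             * (x * exp_rem_quot (x * (1 - \<nu>)) - x * exp_rem_quot (x * (1 / 2 - \<nu>)))"
    unfolding L E \<phi> by (rule gap_identity_upper [OF \<open>x \<noteq> 0\<close> assms(4-6)])
  show "(weighted_log_mean \<nu> a b - G) - \<nu> * E_nu \<nu> a b
           = G * \<nu> * (1 - 2 * \<nu>)
             * (x * exp_rem_quot (x * (1 / 2 - \<nu>)) - x * exp_rem_quot (x * - \<nu>))"
    unfolding L E \<phi> by (rule gap_identity_lower [OF \<open>x \<noteq> 0\<close> assms(4-6)])
qed

lemma E_nu_weighted_log_mean_gaps_sign:
  fixes a b \<nu> :: real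
  assumes "0 < a" and "0 < b" and "a \<noteq> b" and "0 < \<nu>" and "\<nu> < 1" and "\<nu> \<noteq> 1 / 2"
  defines "L \<equiv> weighted_log_mean \<nu> a b - a powr (1 - \<nu>) * b powr \<nu>" and "E \<equiv> E_nu \<nu> a b"
  shows "0 \<le> (1 - 2 * \<nu>) * ((1 - \<nu>) * E - L)" and "0 \<le> (1 - 2 * \<nu>) * (L - \<nu> * E)"
proof -
  define x where "x = ln b - ln a"
  define G where "G = a powr (1 - \<nu>) * b powr \<nu>"
  have "x \<noteq> 0" "0 < G"
    using assms(1-3) by (simp_all add: x_def G_def)
  note gaps = E_nu_weighted_log_mean_gaps [OF assms(1-3) _ _ assms(6), folded x_def G_def L_def E_def]
  have "x * exp_rem_quot (x * (1 / 2 - \<nu>)) \<le> x * exp_rem_quot (x * (1 - \<nu>))"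
       "x * exp_rem_quot (x * - \<nu>) \<le> x * exp_rem_quot (x * (1 / 2 - \<nu>))"
    using \<open>x \<noteq> 0\<close> assms(4-6) by (intro scaled_exp_rem_quot_mono; simp)+
  moreover have "0 \<le> (1 - 2 * \<nu>) * (G * c * (1 - 2 * \<nu>) * D)" if "0 \<le> c" "0 \<le> D" for c D
  proof -
    have "0 \<le> G * c * D * (1 - 2 * \<nu>)\<^sup>2"
      using that \<open>0 < G\<close> by simp
    also have "\<dots> = (1 - 2 * \<nu>) * (G * c * (1 - 2 * \<nu>) * D)"
      by (simp add: power2_eq_square mult_ac)
    finally show ?thesis .
  qed
  ultimately show "0 \<le> (1 - 2 * \<nu>) * ((1 - \<nu>) * E - L)" "0 \<le> (1 - 2 * \<nu>) * (L - \<nu> * E)"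
    using gaps assms(4,5) by simp_all
qed

theorem corollary2p13:
  fixes a b \<nu> :: real
  assumes "a > 0" and "b > 0" and "a \<noteq> b"
    and "0 < \<nu>" and "\<nu> < 1" and "\<nu> \<noteq> 1 / 2"
  shows "min \<nu> (1 - \<nu>) * E_nu \<nu> a b \<le> weighted_log_mean \<nu> a b - a powr (1 - \<nu>) * b powr \<nu>
       \<and> weighted_log_mean \<nu> a b - a powr (1 - \<nu>) * b powr \<nu> \<le> max \<nu> (1 - \<nu>) * E_nu \<nu> a b"
  using E_nu_weighted_log_mean_gaps_sign [OF assms] assms(6)
  by (cases "\<nu> < 1 / 2") (auto simp: zero_le_mult_iff min_def max_def)

end
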